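(* In the setting of the context, suppose $\operatorname{rank}(\bar B_i)=n_i$ for all $i\in\{1,\dots,N-1\}$, $\operatorname{int}(\mathcal Z_N)\neq\emptyset$ (interior in $\mathbb{R}^{n_N}$), and $\|D\|<r_{\mathbb R}(A)$. Then the malfunctioning network $\dot X=(A+D)X+Bu+Cw_N$ is resiliently stabilizable.
   Context: Network of $N$ linear subsystems $\dot x_i=A_ix_i+\bar B_i\bar u_i+\sum_{k\in\mathcal N_i}D_{i,k}x_k$, $x_i\in\mathbb{R}^{n_i}$, $\bar u_i(t)\in\bar{\mathcal U}_i=[-1,1]^{m_i}$, $\mathcal N_i\subseteq\{1,\dots,N\}\setminus\{i\}$; $n_\Sigma=\sum n_i$, $X=(x_1,\dots,x_N)$, $A=\mathrm{diag}(A_1,\dots,A_N)$, $D=(D_{i,j})$ block matrix with zero diagonal blocks and $D_{i,k}=0$ for $k\notin\mathcal N_i$, $D\ne0$. Subsystem $N$ has lost control of $p_N\in\{1,\dots,m_N\}$ actuators: $\bar B_N$ is split into $B_N\in\mathbb{R}^{n_N\times(m_N-p_N)}$ and $C_N\in\mathbb{R}^{n_N\times p_N}$, $\mathcal U_N=[-1,1]^{m_N-p_N}$, $\mathcal W_N=[-1,1]^{p_N}$, so $\dot x_N=A_Nx_N+B_Nu_N+C_Nw_N+\sum_{k}D_{N,k}x_k$. The malfunctioning network is $\dot X=(A+D)X+Bu+Cw_N$ with $B=\mathrm{diag}(\bar B_1,\dots,\bar B_{N-1},B_N)$, $C=\begin{pmatrix}0\\C_N\end{pmatrix}$, $u(t)\in\mathcal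 U=\bar{\mathcal U}_1\times\cdots\times\bar{\mathcal U}_{N-1}\times\mathcal U_N$, $w_N(t)\in\mathcal W_N$. $\mathcal Z_N:=B_N\mathcal U_N\ominus(-C_N\mathcal W_N)=\{z\in\mathbb{R}^{n_N}: z-C_Nw\in B_N\mathcal U_N\ \forall w\in\mathcal W_N\}$. $r_{\mathbb R}(A)=\inf\{\|D'\|: D'\text{ real}, A+D'\text{ has an eigenvalue with positive real part}\}$. A tuple $(M,G,H,\mathcal U,\mathcal W)$ (system $\dot x=Mx+Gu+Hw$) is resiliently stabilizable if for every $x(0)$ and every $w:[0,\infty)\to\mathcal W$ there exist $T\ge0$ and $u:[0,\infty)\to\mathcal U$, with $u(t)$ depending only on $w(t)$, such that the solution exists, is unique and $x(T)=0$. The malfunctioning network is resiliently stabilizable if $(A+D,B,C,\mathcal U,\mathcal W_N)$ is. *)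

theory Defs
  imports "HOL-Analysis.Analysis"
begin

definition cube :: "(real^'a) set" where
  "cube = {v. \<forall>j. \<bar>v $ j\<bar> \<le> 1}"

definition cmat :: "real^'n^'m \<Rightarrow> complex^'n^'m" where
  "cmat M = (\<chi> i j. complex_of_real (M $ i $ j))"

definition has_pos_re_eigenvalue :: "real^'n^'n \<Rightarrow> bool" where
  "has_pos_re_eigenvalue M \<longleftrightarrow>
     (\<exists>(lam::complex) v. v \<noteq> 0 \<and> cmat M *v v = lam *s v \<and> Re lam > 0)"

definition mnorm :: "real^'n^'m \<Rightarrow> real" where
  "mnorm M = onorm (\<lambda>x. M *v x)"

definition real_stab_radius :: "real^'n^'n \<Rightarrow> real" where
  "real_stab_radius A = Inf {mnorm D' | D'. has_pos_re_eigenvalue (A + D')}"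

text \<open>x is a (Caratheodory, integral-equation) solution on [0,\<infinity>) of
  x' = M x + G u + H w with x(0) = x0.\<close>
definition ode_solution ::
  "real^'n^'n \<Rightarrow> real^'m^'n \<Rightarrow> real^'p^'n \<Rightarrow> (real \<Rightarrow> real^'m) \<Rightarrow> (real \<Rightarrow> real^'p)
   \<Rightarrow> real^'n \<Rightarrow> (real \<Rightarrow> real^'n) \<Rightarrow> bool" where
  "ode_solution M G H u w x0 x \<longleftrightarrow>
     x 0 = x0 \<and>
     (\<forall>t\<ge>0. ((\<lambda>s. M *v x s + G *v u s + H *v w s) has_integral (x t - x0)) {0..t})"

text \<open>Resilient stabilizability of (M,G,H,U,W): for every x(0) there is a rule
  u(t) = kappa t (w(t)) (so u(t) depends on the disturbance only through w(t))
  such that for every w:[0,\<infinity>) \<rightarrow> W there is T \<ge> 0 with a unique solution reaching 0 at T.\<close>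
definition resiliently_stabilizable ::
  "real^'n^'n \<Rightarrow> real^'m^'n \<Rightarrow> real^'p^'n \<Rightarrow> (real^'m) set \<Rightarrow> (real^'p) set \<Rightarrow> bool" where
  "resiliently_stabilizable M G H U W \<longleftrightarrow>
     (\<forall>x0. \<exists>kappa :: real \<Rightarrow> real^'p \<Rightarrow> real^'m.
        (\<forall>t\<ge>0. \<forall>v\<in>W. kappa t v \<in> U) \<and>
        (\<forall>w. (\<forall>t\<ge>0. w t \<in> W) \<longrightarrow>
           (\<exists>T\<ge>0. \<exists>x. ode_solution M G H (\<lambda>t. kappa t (w t)) w x0 x \<and>
                 (\<forall>y. ode_solution M G H (\<lambda>t. kappa t (w t)) w x0 y \<longrightarrow> (\<forall>t\<ge>0. y t = x t)) \<and>
                 x T = 0)))"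

text \<open>Block subspace of the network state space corresponding to subsystem i
  (the copy of R^{n_i} inside R^{n_Sigma}).\<close>
definition block_subspace :: "('n \<Rightarrow> nat) \<Rightarrow> nat \<Rightarrow> (real^'n) set" where
  "block_subspace blk i = {z. \<forall>k. blk k \<noteq> i \<longrightarrow> z $ k = 0}"

text \<open>Z_N = B_N U_N \<ominus> (-C_N W_N), embedded in block N of the state space.
  Healthy inputs of subsystem N are the input coordinates j with blkm j = N.\<close>
definition Z_set :: "real^'m^'n \<Rightarrow> real^'p^'n \<Rightarrow> ('m \<Rightarrow> nat) \<Rightarrow> nat \<Rightarrow> (real^'n) set" where
  "Z_set B C blkm N =
     {z. \<forall>w\<in>cube. \<exists>u\<in>cube. (\<forall>j. blkm j \<noteq> N \<longrightarrow> u $ j = 0) \<and> z - C *v w = B *v u}"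

end

(* Since ||D|| < r_R(A), no eigenvalue of A + D has positive real part. The rank
   condition on the healthy subsystems and an interior point of the convex, symmetric set
   Z_N give epsilon > 0 such that every z with ||z|| <= epsilon equals B u + C w with an
   admissible u, whatever the disturbance w is; so the feedback u(t) = kappa(t, w(t)) turns
   the network into x' = (A + D) x + z(t) for any prescribed small input z.
   Every initial state can be steered to 0 with such inputs: in a Schur basis the system is
   upper triangular, and, going up from the last coordinate, each scalar equation
   a' = lam a + g + v with Re lam <= 0 is left alone until the coordinates below it have come
   to rest and is then brought to 0 along exp(lam t) times a cubic profile, whose input is
   small when the transfer time is long. The real part of this complex trajectory solves the
   real system. Uniqueness of the closed-loop solution follows from the Picard iteration
   bound for x' = M x. *)

theory Submission
  imports Defs "Jordan_Normal_Form.Schur_Decomposition"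
begin

(* Jordan_Normal_Form, needed for the Schur decomposition, brings HOL-Algebra into scope: its
   vector indexing is hidden here, and the real vector space notion of subspace has to be
   qualified below. *)
no_notation Matrix.vec_index (infixl "$" 100)

section \<open>Compensating the disturbance\<close>

lemma cube_eq_cbox: "cube = cbox (- 1) (1 :: real^'a)"
  by (auto simp: cube_def mem_box_cart abs_le_iff)

lemma convex_cube: "convex (cube :: (real^'a) set)"
  by (simp add: cube_eq_cbox)

lemma uminus_in_cube: "u \<in> cube \<Longrightarrow> - u \<in> cube"
  by (simp add: cube_def)

lemma norm_le_one_in_cube: "norm u \<le> 1 \<Longrightarrow> u \<in> cube"
  unfolding cube_def using component_le_norm_cart order_trans by blast

lemma convex_Z_set:
  fixes B :: "real^'m::finite^'n::finite" and C :: "real^'p::finite^'n"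
  shows "convex (Z_set B C blkm N)"
proof (rule convexI)
  fix z1 z2 and a b :: real
  assume z: "z1 \<in> Z_set B C blkm N" "z2 \<in> Z_set B C blkm N"
    and ab: "0 \<le> a" "0 \<le> b" "a + b = 1"
  show "a *\<^sub>R z1 + b *\<^sub>R z2 \<in> Z_set B C blkm N"
    unfolding Z_set_def
  proof (intro CollectI ballI)
    fix w :: "real^'p"
    assume w: "w \<in> cube"
    obtain u1 where u1: "u1 \<in> cube" "\<forall>j. blkm j \<noteq> N \<longrightarrow> u1 $ j = 0" "z1 - C *v w = B *v u1"
      using z(1) w unfolding Z_set_def by blast
    obtain u2 where u2: "u2 \<in> cube" "\<forall>j. blkm j \<noteq> N \<longrightarrow> u2 $ j = 0" "z2 - C *v w = B *v u2"
      using z(2) w unfolding Z_set_def by blast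
    have "a *\<^sub>R u1 + b *\<^sub>R u2 \<in> cube"
      using convexD[OF convex_cube u1(1) u2(1) ab] .
    moreover have "\<forall>j. blkm j \<noteq> N \<longrightarrow> (a *\<^sub>R u1 + b *\<^sub>R u2) $ j = 0"
      using u1(2) u2(2) by simp
    moreover have "a *\<^sub>R z1 + b *\<^sub>R z2 - C *v w = B *v (a *\<^sub>R u1 + b *\<^sub>R u2)"
    proof -
      have "C *v w = a *\<^sub>R (C *v w) + b *\<^sub>R (C *v w)"
        using ab(3) by (simp flip: scaleR_add_left)
      then have "a *\<^sub>R z1 + b *\<^sub>R z2 - C *v w = a *\<^sub>R (z1 - C *v w) + b *\<^sub>R (z2 - C *v w)"
        by (simp add: algebra_simps)
      then show ?thesis
        by (simp add: u1(3) u2(3) matrix_vector_right_distrib matrix_vector_mult_scaleR)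
    qed
    ultimately show "\<exists>u\<in>cube. (\<forall>j. blkm j \<noteq> N \<longrightarrow> u $ j = 0) \<and>
        a *\<^sub>R z1 + b *\<^sub>R z2 - C *v w = B *v u"
      by blast
  qed
qed

lemma uminus_in_Z_set:
  fixes B :: "real^'m::finite^'n::finite" and C :: "real^'p::finite^'n"
  assumes z: "z \<in> Z_set B C blkm N"
  shows "- z \<in> Z_set B C blkm N"
  unfolding Z_set_def
proof (intro CollectI ballI)
  fix w :: "real^'p"
  assume "w \<in> cube"
  then obtain u where u: "u \<in> cube" "\<forall>j. blkm j \<noteq> N \<longrightarrow> u $ j = 0" "z - C *v (- w) = B *v u"
    using z uminus_in_cube unfolding Z_set_def by blast
  have "- z - C *v w = B *v (- u)"
    using u(3) by (simp add: linear_neg[OF matrix_vector_mul_linear] algebra_simps)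
  moreover have "\<forall>j. blkm j \<noteq> N \<longrightarrow> (- u) $ j = 0"
    using u(2) by simp
  ultimately show "\<exists>u\<in>cube. (\<forall>j. blkm j \<noteq> N \<longrightarrow> u $ j = 0) \<and> - z - C *v w = B *v u"
    using uminus_in_cube[OF u(1)] by blast
qed

lemma symmetric_convex_contains_subspace_ball:
  fixes S V :: "'a::real_normed_vector set"
  assumes "convex S" and symmetric: "\<And>x. x \<in> S \<Longrightarrow> - x \<in> S" and "Real_Vector_Spaces.subspace V"
    and "(top_of_set V) interior_of S \<noteq> {}"
  obtains r where "r > 0" "\<And>h. h \<in> V \<Longrightarrow> norm h \<le> r \<Longrightarrow> h \<in> S"
proof -
  obtain z0 T where T: "openin (top_of_set V) T" "z0 \<in> T" "T \<subseteq> S"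
    using assms(4) unfolding interior_of_def by blast
  then obtain U where U: "open U" "T = V \<inter> U"
    unfolding openin_open by blast
  have "z0 \<in> U"
    using T(2) U(2) by blast
  then obtain \<rho> where \<rho>: "\<rho> > 0" "ball z0 \<rho> \<subseteq> U"
    using open_contains_ball[THEN iffD1, OF U(1)] by blast
  show thesis
  proof (rule that[of "\<rho> / 4"])
    fix h
    assume h: "h \<in> V" "norm h \<le> \<rho> / 4"
    have "z0 + 2 *\<^sub>R h \<in> V"
      using T(2) U(2) h(1) assms(3) by (simp add: subspace_add subspace_scale)
    moreover have "z0 + 2 *\<^sub>R h \<in> ball z0 \<rho>"
      using h(2) \<rho>(1) by (simp add: dist_norm)
    ultimately have "z0 + 2 *\<^sub>R h \<in> S"
      using \<rho>(2) U(2) T(3) by blast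
    moreover have "- z0 \<in> S"
      using T symmetric by blast
    ultimately have "(1/2) *\<^sub>R (z0 + 2 *\<^sub>R h) + (1/2) *\<^sub>R (- z0) \<in> S"
      by (intro convexD[OF \<open>convex S\<close>]) auto
    then show "h \<in> S"
      by (simp add: algebra_simps)
  qed (use \<rho> in simp)
qed

lemma linear_range_small_preimage:
  fixes f :: "'a::euclidean_space \<Rightarrow> 'b::euclidean_space"
  assumes "linear f"
  obtains r where "r > 0" "\<And>h. h \<in> range f \<Longrightarrow> norm h \<le> r \<Longrightarrow> \<exists>u. norm u \<le> 1 \<and> f u = h"
proof -
  have "\<exists>g. range g \<subseteq> UNIV \<and> linear g \<and> (\<forall>v\<in>range f. f (g v) = v)"
    by (rule linear_exists_right_inverse_on[OF assms subspace_UNIV])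
  then obtain g where g: "linear g" "\<And>v. v \<in> range f \<Longrightarrow> f (g v) = v"
    by auto
  obtain K where K: "K > 0" "\<And>x. norm (g x) \<le> norm x * K"
    using bounded_linear.pos_bounded[OF linear_conv_bounded_linear[THEN iffD1, OF g(1)]] by auto
  show thesis
  proof (rule that[of "1 / K"])
    fix h
    assume h: "h \<in> range f" "norm h \<le> 1 / K"
    have "norm h * K \<le> 1"
      using K(1) h(2) by (simp add: field_simps)
    then have "norm (g h) \<le> 1"
      using K(2)[of h] by linarith
    with g(2)[OF h(1)] show "\<exists>u. norm u \<le> 1 \<and> f u = h"
      by blast
  qed (use K in simp)
qed

lemma subspace_block_subspace: "Real_Vector_Spaces.subspace (block_subspace blk i)"
  unfolding block_subspace_def by (rule real_vector.subspaceI) auto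

lemma block_subspace_eq_span_axes:
  "block_subspace blk i = span ((\<lambda>k. axis k (1::real)) ` {k. blk k = i})"
proof
  show "span ((\<lambda>k. axis k 1) ` {k. blk k = i}) \<subseteq> block_subspace blk i"
    by (rule span_minimal[OF _ subspace_block_subspace]) (auto simp: block_subspace_def axis_def)
  show "block_subspace blk i \<subseteq> span ((\<lambda>k. axis k 1) ` {k. blk k = i})"
  proof
    fix h :: "real^'a"
    assume h: "h \<in> block_subspace blk i"
    have "h = (\<Sum>k\<in>{k. blk k = i}. h $ k *\<^sub>R axis k 1)"
      using h by (auto simp: Finite_Cartesian_Product.vec_eq_iff axis_def block_subspace_def if_distrib[of "\<lambda>x. _ * x"]
          sum.delta cong: if_cong)
    also have "\<dots> \<in> span ((\<lambda>k. axis k 1) ` {k. blk k = i})"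
      by (intro span_sum span_scale span_base) auto
    finally show "h \<in> span ((\<lambda>k. axis k 1) ` {k. blk k = i})" .
  qed
qed

lemma dim_block_subspace: "dim (block_subspace blk i) = card {k. blk k = i}"
proof -
  have "independent ((\<lambda>k. axis k (1::real)) ` {k. blk k = i})"
    by (rule independent_mono[OF independent_Basis]) (auto simp: Basis_vec_def)
  moreover have "card ((\<lambda>k. axis k (1::real)) ` {k. blk k = i}) = card {k. blk k = i}"
    by (rule card_image) (auto simp: inj_on_def axis_eq_axis)
  ultimately show ?thesis
    by (simp add: block_subspace_eq_span_axes dim_eq_card_independent)
qed

lemma block_subspace_subset_span_columns:
  fixes B :: "real^'m::finite^'n::finite"
  assumes B_diag: "\<forall>i j. blk i \<noteq> blkm j \<longrightarrow> B $ i $ j = 0"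
    and rank: "dim {column j B | j. blkm j = i} = card {k. blk k = i}"
  shows "block_subspace blk i \<subseteq> span {column j B | j. blkm j = i}"
proof -
  have "{column j B | j. blkm j = i} \<subseteq> block_subspace blk i"
    using B_diag by (auto simp: block_subspace_def column_def)
  then have "span {column j B | j. blkm j = i} = span (block_subspace blk i)"
    by (intro dim_eq_span) (auto simp: rank dim_block_subspace span_superset)
  then show ?thesis
    by (simp add: span_superset)
qed

lemma block_reachable_from_cube:
  fixes B :: "real^'m::finite^'n::finite"
  assumes "\<forall>i j. blk i \<noteq> blkm j \<longrightarrow> B $ i $ j = 0"
    and "dim {column j B | j. blkm j = i} = card {k. blk k = i}"
  obtains r where "r > 0" "\<And>h. h \<in> block_subspace blk i \<Longrightarrow> norm h \<le> r \<Longrightarrow> \<exists>u\<in>cube. B *v u = h"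
proof -
  have "{column j B | j. blkm j = i} \<subseteq> range ((*v) B)"
    by (auto simp flip: matrix_vector_mult_basis)
  then have "span {column j B | j. blkm j = i} \<subseteq> range ((*v) B)"
    by (rule span_minimal[OF _ linear_subspace_image[OF matrix_vector_mul_linear subspace_UNIV]])
  then have block_range: "block_subspace blk i \<subseteq> range ((*v) B)"
    using block_subspace_subset_span_columns[OF assms] by (rule order_trans[rotated])
  obtain r where "r > 0" and r: "\<And>h. h \<in> range ((*v) B) \<Longrightarrow> norm h \<le> r \<Longrightarrow> \<exists>u. norm u \<le> 1 \<and> B *v u = h"
    using linear_range_small_preimage[OF matrix_vector_mul_linear[of B]] by blast
  show thesis
  proof (rule that[OF \<open>r > 0\<close>])
    fix h
    assume "h \<in> block_subspace blk i" "norm h \<le> r"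
    then obtain u where "norm u \<le> 1" "B *v u = h"
      using r block_range by blast
    then show "\<exists>u\<in>cube. B *v u = h"
      using norm_le_one_in_cube by blast
  qed
qed

lemma matrix_vector_mult_block_diagonal:
  fixes B :: "real^'m::finite^'n::finite"
  assumes "\<forall>i j. blk i \<noteq> blkm j \<longrightarrow> B $ i $ j = 0"
  shows "(B *v (\<chi> j. U (blkm j) $ j)) $ a = (B *v U (blk a)) $ a"
proof -
  have "B $ a $ j * U (blkm j) $ j = B $ a $ j * U (blk a) $ j" for j
    using assms by (cases "blkm j = blk a") auto
  then show ?thesis
    unfolding matrix_vector_mult_def vec_lambda_beta by (rule sum.cong[OF refl])
qed

lemma finite_common_radius:
  fixes P :: "'i \<Rightarrow> real \<Rightarrow> bool"
  assumes "finite I" and radius: "\<And>i. i \<in> I \<Longrightarrow> \<exists>r>0. P i r"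
    and mono: "\<And>i r r'. P i r \<Longrightarrow> 0 < r' \<Longrightarrow> r' \<le> r \<Longrightarrow> P i r'"
  obtains r where "r > 0" "\<And>i. i \<in> I \<Longrightarrow> P i r"
proof -
  obtain \<rho> where \<rho>: "\<forall>i\<in>I. \<rho> i > 0 \<and> P i (\<rho> i)"
    using bchoice[of I "\<lambda>i r. r > 0 \<and> P i r"] radius by blast
  define r where "r = Min (insert 1 (\<rho> ` I))" \<comment> \<open>the 1 covers \<open>I = {}\<close>\<close>
  have "r > 0"
    unfolding r_def using \<rho> \<open>finite I\<close> by (subst Min_gr_iff) auto
  moreover have "P i r" if "i \<in> I" for i
  proof (rule mono)
    show "P i (\<rho> i)" "r \<le> \<rho> i"
      using \<rho> that \<open>finite I\<close> by (auto simp: r_def)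
  qed (fact \<open>r > 0\<close>)
  ultimately show thesis
    using that by blast
qed

lemma block_compensable:
  fixes blk :: "'n::finite \<Rightarrow> nat" and blkm :: "'m::finite \<Rightarrow> nat"
    and B :: "real^'m^'n" and C :: "real^'p::finite^'n"
  assumes B_diag: "\<forall>i j. blk i \<noteq> blkm j \<longrightarrow> B $ i $ j = 0"
    and rank: "\<forall>i\<in>{1..<N}. dim {column j B | j. blkm j = i} = card {k. blk k = i}"
    and Z_int: "(top_of_set (block_subspace blk N)) interior_of (Z_set B C blkm N) \<noteq> {}"
    and "i \<in> {1..N}"
  obtains r where "r > 0" "\<And>h w. h \<in> block_subspace blk i \<Longrightarrow> norm h \<le> r \<Longrightarrow> w \<in> cube \<Longrightarrow>
    \<exists>u\<in>cube. B *v u = h - (if i = N then C *v w else 0)"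
proof (cases "i = N")
  case True
  obtain r where "r > 0"
    and r: "\<And>h. h \<in> block_subspace blk N \<Longrightarrow> norm h \<le> r \<Longrightarrow> h \<in> Z_set B C blkm N"
    using symmetric_convex_contains_subspace_ball[OF convex_Z_set uminus_in_Z_set
        subspace_block_subspace Z_int] by blast
  show thesis
  proof (rule that[OF \<open>r > 0\<close>])
    fix h and w :: "real^'p"
    assume "h \<in> block_subspace blk i" "norm h \<le> r" "w \<in> cube"
    then obtain u where "u \<in> cube" "h - C *v w = B *v u"
      using r True unfolding Z_set_def by blast
    with True show "\<exists>u\<in>cube. B *v u = h - (if i = N then C *v w else 0)"
      by auto
  qed
next
  case False
  with \<open>i \<in> {1..N}\<close> have "i \<in> {1..<N}"
    by auto
  obtain r where "r > 0" and r: "\<And>h. h \<in> block_subspace blk i \<Longrightarrow> norm h \<le> r \<Longrightarrow> \<exists>u\<in>cube. B *v u = h"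
    using block_reachable_from_cube[OF B_diag rank[rule_format, OF \<open>i \<in> {1..<N}\<close>]] by blast
  show thesis
    using that[OF \<open>r > 0\<close>] r False by simp
qed

lemma compensable_near_zero:
  fixes blk :: "'n::finite \<Rightarrow> nat" and blkm :: "'m::finite \<Rightarrow> nat"
    and B :: "real^'m^'n" and C :: "real^'p::finite^'n"
  assumes blocks: "range blk = {1..N}"
    and inputs: "\<forall>j. blkm j \<in> {1..N}"
    and B_diag: "\<forall>i j. blk i \<noteq> blkm j \<longrightarrow> B $ i $ j = 0"
    and C_N: "\<forall>i j. blk i \<noteq> N \<longrightarrow> C $ i $ j = 0"
    and rank: "\<forall>i\<in>{1..<N}. dim {column j B | j. blkm j = i} = card {k. blk k = i}"
    and Z_int: "(top_of_set (block_subspace blk N)) interior_of (Z_set B C blkm N) \<noteq> {}"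
  obtains \<epsilon> where "\<epsilon> > 0" "\<And>z w. norm z \<le> \<epsilon> \<Longrightarrow> w \<in> cube \<Longrightarrow> \<exists>u\<in>cube. B *v u + C *v w = z"
proof -
  obtain \<epsilon> where "\<epsilon> > 0" and \<epsilon>: "\<And>i. i \<in> {1..N} \<Longrightarrow> \<forall>h (w :: real^'p). h \<in> block_subspace blk i \<longrightarrow> norm h \<le> \<epsilon> \<longrightarrow>
      w \<in> cube \<longrightarrow> (\<exists>u\<in>cube. B *v u = h - (if i = N then C *v w else 0))"
  proof (rule finite_common_radius)
    show "\<exists>r>0. \<forall>h (w :: real^'p). h \<in> block_subspace blk i \<longrightarrow> norm h \<le> r \<longrightarrow>
        w \<in> cube \<longrightarrow> (\<exists>u\<in>cube. B *v u = h - (if i = N then C *v w else 0))" if "i \<in> {1..N}" for i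
      using block_compensable[OF B_diag rank Z_int that] by metis
  qed auto
  have "\<exists>u\<in>cube. B *v u + C *v w = z" if z: "norm z \<le> \<epsilon>" and w: "w \<in> cube" for z w
  proof -
    define zb where "zb i = (\<chi> a. if blk a = i then z $ a else 0)" for i
    have "zb i \<in> block_subspace blk i" for i
      by (simp add: zb_def block_subspace_def)
    moreover have "norm (zb i) \<le> \<epsilon>" for i
    proof -
      have "norm (zb i) \<le> norm z"
        by (rule norm_le_componentwise_cart) (simp add: zb_def)
      with z show ?thesis
        by linarith
    qed
    ultimately have "\<forall>i\<in>{1..N}. \<exists>u\<in>cube. B *v u = zb i - (if i = N then C *v w else 0)"
      using \<epsilon> w by blast
    then obtain U where U_cube: "\<And>i. i \<in> {1..N} \<Longrightarrow> U i \<in> cube"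
      and U: "\<And>i. i \<in> {1..N} \<Longrightarrow> B *v U i = zb i - (if i = N then C *v w else 0)"
      using bchoice[of "{1..N}"] by (metis (no_types, lifting))
    define u where "u = (\<chi> j. U (blkm j) $ j)"
    have "u \<in> cube"
      using U_cube inputs by (auto simp: cube_def u_def)
    moreover have "(B *v u + C *v w) $ a = z $ a" for a
    proof -
      have "blk a \<in> {1..N}"
        using blocks by auto
      then have "(B *v u) $ a = z $ a - (if blk a = N then C *v w else 0) $ a"
        using U[of "blk a"] by (simp add: u_def matrix_vector_mult_block_diagonal[OF B_diag] zb_def)
      moreover have "(C *v w) $ a = 0" if "blk a \<noteq> N"
        using C_N that by (simp add: matrix_vector_mult_def)
      ultimately show ?thesis
        by auto
    qed
    ultimately show ?thesis
      by (auto simp: Finite_Cartesian_Product.vec_eq_iff)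
  qed
  with \<open>\<epsilon> > 0\<close> that show thesis
    by blast
qed

section \<open>Null steering with small inputs\<close>

definition smoothstep :: "real \<Rightarrow> real" where
  "smoothstep r = 1 - 3 * r\<^sup>2 + 2 * r ^ 3"

definition smoothstep_deriv :: "real \<Rightarrow> real" where
  "smoothstep_deriv r = 6 * r\<^sup>2 - 6 * r"

lemma smoothstep_has_real_derivative: "(smoothstep has_real_derivative smoothstep_deriv r) (at r)"
  unfolding smoothstep_def smoothstep_deriv_def
  by (auto intro!: derivative_eq_intros simp: power2_eq_square algebra_simps)

lemma abs_smoothstep_deriv_le:
  assumes "0 \<le> r" "r \<le> 1"
  shows "\<bar>smoothstep_deriv r\<bar> \<le> 3 / 2"
proof -
  have "6 * r\<^sup>2 - 6 * r \<le> 0"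
    using assms by (simp add: power2_eq_square mult_left_le)
  moreover have "6 * r\<^sup>2 - 6 * r + 3 / 2 = 6 * (r - 1 / 2)\<^sup>2"
    by (simp add: power2_eq_square algebra_simps)
  moreover have "0 \<le> 6 * (r - 1 / 2)\<^sup>2"
    by simp
  ultimately show ?thesis
    unfolding smoothstep_deriv_def by linarith
qed

lemma smoothstep_profile_has_vector_derivative:
  fixes lam a :: complex and t0 T x :: real
  assumes "T > 0"
  defines "b \<equiv> \<lambda>x. exp ((x - t0) *\<^sub>R lam) * a * of_real (smoothstep ((x - t0) / T))"
  shows "(b has_vector_derivative
           lam * b x + exp ((x - t0) *\<^sub>R lam) * a * of_real (smoothstep_deriv ((x - t0) / T) / T)) (at x)"
proof -
  have b_eq: "b = (\<lambda>x. exp (x *\<^sub>R lam) * (exp (- (t0 *\<^sub>R lam)) * a * of_real (smoothstep ((x - t0) / T))))"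
    by (auto simp: b_def scaleR_diff_left exp_diff exp_minus field_simps)
  have "((\<lambda>x. (x - t0) / T) has_real_derivative 1 / T) (at x)"
    using assms(1) by (auto intro!: derivative_eq_intros)
  from DERIV_chain[OF smoothstep_has_real_derivative this]
  have "((\<lambda>x. smoothstep ((x - t0) / T)) has_real_derivative smoothstep_deriv ((x - t0) / T) / T) (at x)"
    by (simp add: o_def)
  then have "((\<lambda>x. exp (- (t0 *\<^sub>R lam)) * a * of_real (smoothstep ((x - t0) / T))) has_vector_derivative
               exp (- (t0 *\<^sub>R lam)) * a * of_real (smoothstep_deriv ((x - t0) / T) / T)) (at x)"
    by (intro has_vector_derivative_mult_right has_vector_derivative_of_real)
  from has_vector_derivative_mult[OF exp_scaleR_has_vector_derivative_right[where A = lam] this]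
  show ?thesis
    unfolding b_eq by (simp add: algebra_simps scaleR_diff_left exp_diff exp_minus field_simps)
qed

lemma smoothstep_profile_deriv_norm_le:
  fixes lam a :: complex and t0 T s :: real
  assumes "Re lam \<le> 0" "T > 0" "t0 \<le> s" "s \<le> t0 + T"
  shows "cmod (exp ((s - t0) *\<^sub>R lam) * a * of_real (smoothstep_deriv ((s - t0) / T) / T))
    \<le> 3 * cmod a / (2 * T)"
proof -
  have r: "0 \<le> (s - t0) / T" "(s - t0) / T \<le> 1"
    using assms by (auto simp: field_simps)
  have "cmod (exp ((s - t0) *\<^sub>R lam) * a * of_real (smoothstep_deriv ((s - t0) / T) / T))
      = exp ((s - t0) * Re lam) * cmod a * (\<bar>smoothstep_deriv ((s - t0) / T)\<bar> / T)"
    using assms(2) by (simp add: norm_mult del: of_real_divide)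
  also have "\<dots> \<le> 1 * cmod a * ((3 / 2) / T)"
    using assms abs_smoothstep_deriv_le[OF r]
    by (intro mult_mono divide_right_mono) (auto simp: mult_nonneg_nonpos)
  finally show ?thesis
    by simp
qed

lemma scalar_null_steering:
  fixes lam a :: complex and t0 \<delta> :: real
  assumes lam: "Re lam \<le> 0" and "\<delta> > 0"
  obtains b v T where "T > 0" "b t0 = a" "v t0 = 0"
    "\<forall>t\<ge>t0. ((\<lambda>s. lam * b s + v s) has_integral (b t - a)) {t0..t}"
    "\<forall>s. cmod (v s) \<le> \<delta>" "\<forall>t\<ge>t0 + T. b t = 0"
proof -
  define T where "T = 3 * cmod a / (2 * \<delta>) + 1" \<comment> \<open>so that \<open>3 |a| / (2 T) \<le> \<delta>\<close>\<close>
  have "T > 0"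
    unfolding T_def using \<open>\<delta> > 0\<close> by (simp add: add_nonneg_pos)
  define B where "B x = exp ((x - t0) *\<^sub>R lam) * a * of_real (smoothstep ((x - t0) / T))" for x
  define V where "V x = exp ((x - t0) *\<^sub>R lam) * a * of_real (smoothstep_deriv ((x - t0) / T) / T)" for x
  define b where "b x = (if x \<le> t0 + T then B x else 0)" for x
  define v where "v x = (if t0 \<le> x \<and> x \<le> t0 + T then V x else 0)" for x
  have B_end: "B (t0 + T) = 0" and V_end: "V (t0 + T) = 0" and B_start: "B t0 = a"
    using \<open>T > 0\<close> by (simp_all add: B_def V_def smoothstep_def smoothstep_deriv_def)
  have B_integral: "((\<lambda>s. lam * B s + V s) has_integral (B t - B t0)) {t0..t}" if "t0 \<le> t" for t
    using that smoothstep_profile_has_vector_derivative[OF \<open>T > 0\<close>, of t0 lam a]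
    by (intro fundamental_theorem_of_calculus)
      (auto simp: B_def[abs_def] V_def intro: has_vector_derivative_at_within)
  have "((\<lambda>s. lam * b s + v s) has_integral (b t - a)) {t0..t}" if "t \<ge> t0" for t
  proof (cases "t \<le> t0 + T")
    case True
    have "((\<lambda>s. lam * b s + v s) has_integral (B t - B t0)) {t0..t}"
      by (rule has_integral_eq[OF _ B_integral[OF that]]) (use True in \<open>auto simp: b_def v_def\<close>)
    then show ?thesis
      using True by (simp add: b_def B_start)
  next
    case False
    have "((\<lambda>s. lam * b s + v s) has_integral (B (t0 + T) - B t0)) {t0..t0 + T}"
      by (rule has_integral_eq[OF _ B_integral]) (use \<open>T > 0\<close> in \<open>auto simp: b_def v_def\<close>)
    moreover have "((\<lambda>s. lam * b s + v s) has_integral 0) {t0 + T..t}"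
      by (rule has_integral_is_0) (auto simp: b_def v_def B_end V_end)
    ultimately have "((\<lambda>s. lam * b s + v s) has_integral (B (t0 + T) - B t0 + 0)) {t0..t}"
      using False \<open>T > 0\<close> by (intro has_integral_combine) auto
    then show ?thesis
      using False by (simp add: b_def B_end B_start)
  qed
  moreover have "cmod (v s) \<le> \<delta>" for s
  proof (cases "t0 \<le> s \<and> s \<le> t0 + T")
    case True
    then have "cmod (V s) \<le> 3 * cmod a / (2 * T)"
      unfolding V_def using lam \<open>T > 0\<close> by (intro smoothstep_profile_deriv_norm_le) auto
    also have "\<dots> \<le> \<delta>"
      using \<open>\<delta> > 0\<close> \<open>T > 0\<close> by (simp add: T_def field_simps)
    finally show ?thesis
      using True by (simp add: v_def)
  qed (use \<open>\<delta> > 0\<close> in \<open>auto simp: v_def\<close>)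
  moreover have "b t0 = a" "v t0 = 0" "\<forall>t\<ge>t0 + T. b t = 0"
    using \<open>T > 0\<close> by (simp_all add: b_def v_def B_start V_def smoothstep_deriv_def B_end)
  ultimately show thesis
    using that \<open>T > 0\<close> by blast
qed

lemma continuous_on_primitive:
  fixes y f :: "real \<Rightarrow> 'a::banach"
  assumes "\<forall>s\<in>{0..t}. (f has_integral (y s - c)) {0..s}"
  shows "continuous_on {0..t} y"
proof -
  have "f integrable_on {0..t}"
    using assms by (cases "0 \<le> t") auto
  then have "continuous_on {0..t} (\<lambda>s. c + integral {0..s} f)"
    by (intro continuous_on_add continuous_on_const indefinite_integral_continuous_1)
  moreover have "c + integral {0..s} f = y s" if "s \<in> {0..t}" for s
    using integral_unique[of f "y s - c"] assms that by simp
  ultimately show ?thesis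
    by (rule continuous_on_eq) simp
qed

lemma scalar_linear_ode_solution:
  fixes lam a0 :: complex and g :: "real \<Rightarrow> complex"
  assumes g: "\<And>t. continuous_on {0..t} g"
  obtains a where "a 0 = a0" "\<forall>t\<ge>0. ((\<lambda>s. lam * a s + g s) has_integral (a t - a0)) {0..t}"
proof -
  define h where "h s = exp (- (s *\<^sub>R lam)) * g s" for s
  define a where "a t = exp (t *\<^sub>R lam) * (a0 + integral {0..t} h)" for t
  have "a 0 = a0"
    by (simp add: a_def)
  moreover have "\<forall>t\<ge>0. ((\<lambda>s. lam * a s + g s) has_integral (a t - a0)) {0..t}"
  proof (intro allI impI)
    fix t :: real
    assume "0 \<le> t"
    have "continuous_on {0..t} h"
      unfolding h_def by (intro continuous_intros g)
    have "(a has_vector_derivative (lam * a x + g x)) (at x within {0..t})" if "x \<in> {0..t}" for x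
    proof -
      have "((\<lambda>u. a0 + integral {0..u} h) has_vector_derivative (0 + h x)) (at x within {0..t})"
        by (intro has_vector_derivative_add has_vector_derivative_const integral_has_vector_derivative
            \<open>continuous_on {0..t} h\<close> that)
      note product_rule = has_vector_derivative_mult[OF exp_scaleR_has_vector_derivative_right[where A = lam] this]
      have "exp (x *\<^sub>R lam) * h x = g x"
        by (simp add: h_def mult.assoc[symmetric] exp_add[symmetric])
      with product_rule show ?thesis
        unfolding a_def[abs_def] by (simp add: algebra_simps)
    qed
    from fundamental_theorem_of_calculus[OF \<open>0 \<le> t\<close> this]
    show "((\<lambda>s. lam * a s + g s) has_integral (a t - a0)) {0..t}"
      by (simp add: \<open>a 0 = a0\<close>)
  qed
  ultimately show thesis
    using that by blast
qed

lemma forced_scalar_null_steering: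
  fixes lam a0 :: complex and g :: "real \<Rightarrow> complex"
  assumes lam: "Re lam \<le> 0" and "\<delta> > 0" and "T1 \<ge> 0"
    and g_cont: "\<And>t. continuous_on {0..t} g" and g_end: "\<And>s. s \<ge> T1 \<Longrightarrow> g s = 0"
  obtains a v T where "T \<ge> 0" "a 0 = a0"
    "\<forall>t\<ge>0. ((\<lambda>s. lam * a s + g s + v s) has_integral (a t - a0)) {0..t}"
    "\<forall>s. cmod (v s) \<le> \<delta>" "\<forall>t\<ge>T. a t = 0"
proof -
  obtain a where a_0: "a 0 = a0"
    and a_int: "\<forall>t\<ge>0. ((\<lambda>s. lam * a s + g s) has_integral (a t - a0)) {0..t}"
    by (rule scalar_linear_ode_solution[OF g_cont])
  obtain b vb T2 where "T2 > 0" and b_T1: "b T1 = a T1" and vb_T1: "vb T1 = 0"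
    and b_int: "\<forall>t\<ge>T1. ((\<lambda>s. lam * b s + vb s) has_integral (b t - a T1)) {T1..t}"
    and vb_small: "\<forall>s. cmod (vb s) \<le> \<delta>" and b_end: "\<forall>t\<ge>T1 + T2. b t = 0"
    by (rule scalar_null_steering[OF lam \<open>\<delta> > 0\<close>])
  \<comment> \<open>follow the free solution until the forcing has vanished, then steer to 0\<close>
  define y where "y s = (if s \<le> T1 then a s else b s)" for s
  define v where "v s = (if s \<le> T1 then 0 else vb s)" for s
  have "((\<lambda>s. lam * y s + g s + v s) has_integral (y t - a0)) {0..t}" if "t \<ge> 0" for t
  proof (cases "t \<le> T1")
    case True
    have "((\<lambda>s. lam * y s + g s + v s) has_integral (a t - a0)) {0..t}"
      by (rule has_integral_eq[OF _ a_int[rule_format, OF that]]) (use True in \<open>auto simp: y_def v_def\<close>)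
    then show ?thesis
      using True by (simp add: y_def)
  next
    case False
    have "((\<lambda>s. lam * y s + g s + v s) has_integral (a T1 - a0)) {0..T1}"
      by (rule has_integral_eq[OF _ a_int[rule_format, OF \<open>T1 \<ge> 0\<close>]]) (auto simp: y_def v_def)
    moreover have "((\<lambda>s. lam * y s + g s + v s) has_integral (b t - a T1)) {T1..t}"
      by (rule has_integral_eq[OF _ b_int[rule_format]])
        (use False b_T1 vb_T1 in \<open>auto simp: y_def v_def g_end\<close>)
    ultimately have "((\<lambda>s. lam * y s + g s + v s) has_integral (a T1 - a0 + (b t - a T1))) {0..t}"
      using False \<open>T1 \<ge> 0\<close> by (intro has_integral_combine) auto
    then show ?thesis
      using False by (simp add: y_def)
  qed
  moreover have "cmod (v s) \<le> \<delta>" for s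
    using vb_small \<open>\<delta> > 0\<close> by (simp add: v_def)
  moreover have "y t = 0" if "t \<ge> T1 + T2" for t
    using that b_end \<open>T2 > 0\<close> by (simp add: y_def)
  moreover have "y 0 = a0" "T1 + T2 \<ge> 0"
    using a_0 \<open>T1 \<ge> 0\<close> \<open>T2 > 0\<close> by (simp_all add: y_def)
  ultimately show thesis
    using that[of "T1 + T2" y v] by blast
qed

text \<open>The subsystem of the coordinates in \<open>I\<close>, in integral form; for upper triangular \<open>R\<close>
  and \<open>I = {k..<n}\<close> it does not involve the remaining coordinates.\<close>

definition null_steering ::
  "(nat \<Rightarrow> nat \<Rightarrow> complex) \<Rightarrow> nat set \<Rightarrow> real \<Rightarrow> (nat \<Rightarrow> complex) \<Rightarrow>
   (real \<Rightarrow> nat \<Rightarrow> complex) \<Rightarrow> (real \<Rightarrow> nat \<Rightarrow> complex) \<Rightarrow> real \<Rightarrow> bool" where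
  "null_steering R I \<delta> y0 y v T \<longleftrightarrow>
     T \<ge> 0 \<and> (\<forall>i\<in>I. y 0 i = y0 i) \<and>
     (\<forall>i\<in>I. \<forall>t\<ge>0. ((\<lambda>s. (\<Sum>j\<in>I. R i j * y s j) + v s i) has_integral (y t i - y0 i)) {0..t}) \<and>
     (\<forall>s. \<forall>i\<in>I. cmod (v s i) \<le> \<delta>) \<and> (\<forall>t\<ge>T. \<forall>i\<in>I. y t i = 0)"

lemma null_steering_continuous_on:
  assumes "null_steering R I \<delta> y0 y v T" and "i \<in> I"
  shows "continuous_on {0..t} (\<lambda>s. y s i)"
  using assms unfolding null_steering_def
  by (intro continuous_on_primitive[where c = "y0 i" and f = "\<lambda>s. (\<Sum>j\<in>I. R i j * y s j) + v s i"]) auto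

lemma null_steering_triangular_step:
  assumes upper: "\<And>i j. j < i \<Longrightarrow> R i j = 0" and "Re (R k k) \<le> 0" and "k < n" and "\<delta> > 0"
    and steer: "null_steering R {Suc k..<n} \<delta> y0 y' v' T1"
  obtains y v T where "null_steering R {k..<n} \<delta> y0 y v T"
proof -
  have "T1 \<ge> 0" and y'_0: "\<forall>i\<in>{Suc k..<n}. y' 0 i = y0 i"
    and y'_int: "\<forall>i\<in>{Suc k..<n}. \<forall>t\<ge>0.
        ((\<lambda>s. (\<Sum>j\<in>{Suc k..<n}. R i j * y' s j) + v' s i) has_integral (y' t i - y0 i)) {0..t}"
    and v'_small: "\<forall>s. \<forall>i\<in>{Suc k..<n}. cmod (v' s i) \<le> \<delta>"
    and y'_end: "\<forall>t\<ge>T1. \<forall>i\<in>{Suc k..<n}. y' t i = 0"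
    using steer unfolding null_steering_def by blast+
  define g where "g s = (\<Sum>j\<in>{Suc k..<n}. R k j * y' s j)" for s
  have g_cont: "continuous_on {0..t} g" for t
    unfolding g_def using null_steering_continuous_on[OF steer]
    by (auto intro!: continuous_on_sum continuous_on_mult_left)
  have g_end: "g s = 0" if "s \<ge> T1" for s
    using y'_end that by (simp add: g_def)
  obtain a va Ta where "Ta \<ge> 0" "a 0 = y0 k"
    and a_int: "\<forall>t\<ge>0. ((\<lambda>s. R k k * a s + g s + va s) has_integral (a t - y0 k)) {0..t}"
    and va_small: "\<forall>s. cmod (va s) \<le> \<delta>" and a_end: "\<forall>t\<ge>Ta. a t = 0"
    by (rule forced_scalar_null_steering[OF \<open>Re (R k k) \<le> 0\<close> \<open>\<delta> > 0\<close> \<open>T1 \<ge> 0\<close> g_cont g_end])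
  define y where "y s i = (if i = k then a s else y' s i)" for s i
  define v where "v s i = (if i = k then va s else v' s i)" for s i
  have row_k: "(\<Sum>j\<in>{k..<n}. R k j * y s j) + v s k = R k k * a s + g s + va s" for s
    using \<open>k < n\<close> by (simp add: sum.atLeast_Suc_lessThan g_def y_def v_def)
  have row_i: "(\<Sum>j\<in>{k..<n}. R i j * y s j) + v s i = (\<Sum>j\<in>{Suc k..<n}. R i j * y' s j) + v' s i"
    if "i \<in> {Suc k..<n}" for i s
    using \<open>k < n\<close> that upper[of k i] by (simp add: sum.atLeast_Suc_lessThan y_def v_def)
  have "null_steering R {k..<n} \<delta> y0 y v (max T1 Ta)"
    unfolding null_steering_def
  proof (intro conjI ballI allI impI)
    show "0 \<le> max T1 Ta"
      using \<open>T1 \<ge> 0\<close> by simp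
    show "y 0 i = y0 i" if "i \<in> {k..<n}" for i
      using that y'_0 \<open>a 0 = y0 k\<close> by (auto simp: y_def)
    show "((\<lambda>s. (\<Sum>j\<in>{k..<n}. R i j * y s j) + v s i) has_integral (y t i - y0 i)) {0..t}"
      if "i \<in> {k..<n}" "0 \<le> t" for i t
    proof (cases "i = k")
      case True
      have "((\<lambda>s. (\<Sum>j\<in>{k..<n}. R k j * y s j) + v s k) has_integral (y t k - y0 k)) {0..t}"
        unfolding row_k using a_int that(2) by (simp add: y_def)
      with True show ?thesis
        by simp
    next
      case False
      with that have "i \<in> {Suc k..<n}"
        by auto
      then have "((\<lambda>s. (\<Sum>j\<in>{k..<n}. R i j * y s j) + v s i) has_integral (y' t i - y0 i)) {0..t}"
        unfolding row_i[OF \<open>i \<in> {Suc k..<n}\<close>] using y'_int that(2) by simp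
      with False show ?thesis
        by (simp add: y_def)
    qed
    show "cmod (v s i) \<le> \<delta>" if "i \<in> {k..<n}" for s i
      using that v'_small va_small by (auto simp: v_def)
    show "y t i = 0" if "max T1 Ta \<le> t" "i \<in> {k..<n}" for t i
      using that y'_end a_end by (auto simp: y_def)
  qed
  then show thesis
    by (rule that)
qed

lemma triangular_null_steering:
  assumes "\<And>i j. j < i \<Longrightarrow> R i j = 0" and "\<And>i. i < n \<Longrightarrow> Re (R i i) \<le> 0" and "\<delta> > 0"
    and "k \<le> n"
  shows "\<exists>y v T. null_steering R {k..<n} \<delta> y0 y v T"
  using \<open>k \<le> n\<close>
proof (induction k rule: inc_induct)
  case base
  show ?case
    by (auto simp: null_steering_def)
next
  case (step k)
  then obtain y v T where steer: "null_steering R {Suc k..<n} \<delta> y0 y v T"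
    by blast
  have "k < n" "Re (R k k) \<le> 0"
    using step.hyps assms(2) by auto
  obtain y' v' T' where "null_steering R {k..<n} \<delta> y0 y' v' T'"
    by (rule null_steering_triangular_step[OF assms(1) \<open>Re (R k k) \<le> 0\<close> \<open>k < n\<close> assms(3) steer])
  then show ?case
    by blast
qed

lemma char_poly_root_eigenvector_nat:
  fixes Mc :: "nat \<Rightarrow> nat \<Rightarrow> complex"
  assumes "poly (char_poly (Matrix.mat n n (\<lambda>(i, j). Mc i j))) e = 0"
  obtains u where "\<exists>j<n. u j \<noteq> 0" "\<forall>i<n. (\<Sum>j<n. Mc i j * u j) = e * u i"
proof -
  define A where "A = Matrix.mat n n (\<lambda>(i, j). Mc i j)"
  have A: "A \<in> carrier_mat n n"
    by (simp add: A_def)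
  have "eigenvalue A e"
    using assms eigenvalue_root_char_poly[OF A] by (simp add: A_def)
  then obtain v where v: "v \<in> carrier_vec n" "v \<noteq> 0\<^sub>v n" "A *\<^sub>v v = e \<cdot>\<^sub>v v"
    unfolding eigenvalue_def eigenvector_def using A by auto
  have "\<exists>j<n. Matrix.vec_index v j \<noteq> 0"
  proof (rule ccontr)
    assume "\<not> (\<exists>j<n. Matrix.vec_index v j \<noteq> 0)"
    then have "v = 0\<^sub>v n"
      using v(1) by (intro eq_vecI) auto
    with v(2) show False
      by simp
  qed
  moreover have "(\<Sum>j<n. Mc i j * Matrix.vec_index v j) = e * Matrix.vec_index v i" if "i < n" for i
  proof -
    have "(\<Sum>j<n. Mc i j * Matrix.vec_index v j) = Matrix.vec_index (A *\<^sub>v v) i"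
      using v(1) that by (simp add: A_def scalar_prod_def lessThan_atLeast0)
    also have "\<dots> = e * Matrix.vec_index v i"
      using v that by simp
    finally show ?thesis .
  qed
  ultimately show thesis
    using that by blast
qed

lemma similar_mat_wit_intertwines:
  assumes "similar_mat_wit A S P Q" and "A \<in> carrier_mat n n"
  shows "A * P = P * S"
proof -
  from assms have carrier: "S \<in> carrier_mat n n" "P \<in> carrier_mat n n" "Q \<in> carrier_mat n n"
    and "Q * P = 1\<^sub>m n" and "A = P * S * Q"
    unfolding similar_mat_wit_def Let_def by auto
  then have "A * P = P * S * (Q * P)"
    using carrier by (simp add: assoc_mult_mat[of _ n n _ n _ n])
  then show ?thesis
    using carrier \<open>Q * P = 1\<^sub>m n\<close> by simp
qed

lemma index_mult_mat_square:
  fixes X Y :: "'a::comm_semiring_0 mat"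
  assumes "X \<in> carrier_mat n n" "Y \<in> carrier_mat n n" "i < n" "j < n"
  shows "(X * Y) $$ (i, j) = (\<Sum>l<n. X $$ (i, l) * Y $$ (l, j))"
  using assms by (simp add: scalar_prod_def lessThan_atLeast0)

lemma schur_triangularization_nat:
  fixes Mc :: "nat \<Rightarrow> nat \<Rightarrow> complex"
  obtains P Q R where "\<forall>i<n. \<forall>j<n. (\<Sum>l<n. P i l * Q l j) = (if i = j then 1 else 0)"
    "\<forall>i<n. \<forall>j<n. (\<Sum>l<n. Mc i l * P l j) = (\<Sum>l<n. P i l * R l j)"
    "\<forall>i j. j < i \<longrightarrow> R i j = 0"
    "\<forall>i<n. poly (char_poly (Matrix.mat n n (\<lambda>(i, j). Mc i j))) (R i i) = 0"
proof -
  define A where "A = Matrix.mat n n (\<lambda>(i, j). Mc i j)"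
  have A: "A \<in> carrier_mat n n"
    by (simp add: A_def)
  obtain es where es: "char_poly A = (\<Prod>a\<leftarrow>es. [:- a, 1:])"
    using char_poly_factorized[OF A] by blast
  obtain S P Q where SPQ: "schur_decomposition A es = (S, P, Q)"
    by (cases "schur_decomposition A es") auto
  from schur_decomposition[OF A es SPQ]
  have sim: "similar_mat_wit A S P Q" and "upper_triangular S" and diag: "diag_mat S = es"
    by auto
  from sim A have carrier: "S \<in> carrier_mat n n" "P \<in> carrier_mat n n" "Q \<in> carrier_mat n n"
    and PQ: "P * Q = 1\<^sub>m n"
    unfolding similar_mat_wit_def Let_def by auto
  define R where "R i j = (if i < n \<and> j < n then S $$ (i, j) else 0)" for i j
  have "\<forall>i<n. \<forall>j<n. (\<Sum>l<n. P $$ (i, l) * Q $$ (l, j)) = (if i = j then 1 else 0)"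
    using index_mult_mat_square[OF carrier(2,3)] PQ by simp
  moreover have "\<forall>i<n. \<forall>j<n. (\<Sum>l<n. Mc i l * P $$ (l, j)) = (\<Sum>l<n. P $$ (i, l) * R l j)"
    using index_mult_mat_square[OF A carrier(2)] index_mult_mat_square[OF carrier(2,1)]
      similar_mat_wit_intertwines[OF sim A]
    by (simp add: A_def R_def)
  moreover have "\<forall>i j. j < i \<longrightarrow> R i j = 0"
    using \<open>upper_triangular S\<close> carrier(1) by (auto simp: R_def upper_triangular_def)
  moreover have "\<forall>i<n. poly (char_poly A) (R i i) = 0"
  proof (intro allI impI)
    fix i
    assume "i < n"
    then have "R i i \<in> set es"
      using diag carrier(1) unfolding diag_mat_def R_def by auto
    then show "poly (char_poly A) (R i i) = 0"
      unfolding es by (induction es) auto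
  qed
  ultimately show thesis
    using that[of "\<lambda>i l. P $$ (i, l)" "\<lambda>i l. Q $$ (i, l)" R] by (simp add: A_def)
qed

lemma sum_mult_sum_swap:
  fixes f h :: "nat \<Rightarrow> 'a::comm_semiring_1" and g :: "nat \<Rightarrow> nat \<Rightarrow> 'a"
  shows "(\<Sum>l<n. f l * (\<Sum>j<n. g l j * h j)) = (\<Sum>j<n. (\<Sum>l<n. f l * g l j) * h j)"
proof -
  have "(\<Sum>l<n. f l * (\<Sum>j<n. g l j * h j)) = (\<Sum>l<n. \<Sum>j<n. f l * g l j * h j)"
    by (simp add: sum_distrib_left mult.assoc)
  also have "\<dots> = (\<Sum>j<n. \<Sum>l<n. f l * g l j * h j)"
    by (rule sum.swap)
  finally show ?thesis
    by (simp add: sum_distrib_right)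
qed

lemma similarity_transform_row:
  fixes Mc P R :: "nat \<Rightarrow> nat \<Rightarrow> complex"
  assumes MP: "\<forall>i<n. \<forall>j<n. (\<Sum>l<n. Mc i l * P l j) = (\<Sum>l<n. P i l * R l j)" and "i < n"
  shows "(\<Sum>j<n. Mc i j * (\<Sum>l<n. P j l * w l)) + (\<Sum>l<n. P i l * v l)
    = (\<Sum>m<n. P i m * ((\<Sum>l<n. R m l * w l) + v m))"
proof -
  have "(\<Sum>j<n. Mc i j * (\<Sum>l<n. P j l * w l)) = (\<Sum>l<n. (\<Sum>j<n. Mc i j * P j l) * w l)"
    by (rule sum_mult_sum_swap)
  also have "\<dots> = (\<Sum>l<n. (\<Sum>m<n. P i m * R m l) * w l)"
    using MP \<open>i < n\<close> by simp
  also have "\<dots> = (\<Sum>m<n. P i m * (\<Sum>l<n. R m l * w l))"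
    by (rule sum_mult_sum_swap[symmetric])
  finally show ?thesis
    by (simp add: distrib_left sum.distrib)
qed

lemma norm_matrix_row_mult_le:
  fixes P :: "nat \<Rightarrow> nat \<Rightarrow> complex" and v :: "nat \<Rightarrow> complex"
  assumes "i < n" and v_small: "\<forall>l<n. cmod (v l) \<le> \<delta>"
  shows "cmod (\<Sum>l<n. P i l * v l) \<le> (\<Sum>i<n. \<Sum>l<n. cmod (P i l)) * \<delta>"
proof -
  have "\<delta> \<ge> 0"
    using v_small[rule_format, OF \<open>i < n\<close>] norm_ge_zero[of "v i"] by linarith
  have "cmod (\<Sum>l<n. P i l * v l) \<le> (\<Sum>l<n. cmod (P i l * v l))"
    by (rule norm_sum)
  also have "\<dots> \<le> (\<Sum>l<n. cmod (P i l) * \<delta>)"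
    using v_small by (intro sum_mono) (simp add: norm_mult mult_left_mono)
  also have "\<dots> = (\<Sum>l<n. cmod (P i l)) * \<delta>"
    by (simp add: sum_distrib_right)
  also have "\<dots> \<le> (\<Sum>i<n. \<Sum>l<n. cmod (P i l)) * \<delta>"
    using \<open>i < n\<close> \<open>\<delta> \<ge> 0\<close>
    by (intro mult_right_mono member_le_sum[of i "{..<n}" "\<lambda>i. \<Sum>l<n. cmod (P i l)"])
      (auto intro: sum_nonneg)
  finally show ?thesis .
qed

lemma null_steering_change_of_basis:
  fixes Mc P Q R :: "nat \<Rightarrow> nat \<Rightarrow> complex"
  assumes PQ: "\<forall>i<n. \<forall>j<n. (\<Sum>l<n. P i l * Q l j) = (if i = j then 1 else 0)"
    and MP: "\<forall>i<n. \<forall>j<n. (\<Sum>l<n. Mc i l * P l j) = (\<Sum>l<n. P i l * R l j)"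
    and steer: "null_steering R {..<n} \<delta> (\<lambda>l. \<Sum>j<n. Q l j * y0 j) w v T"
    and small: "(\<Sum>i<n. \<Sum>l<n. cmod (P i l)) * \<delta> \<le> \<delta>'"
  shows "null_steering Mc {..<n} \<delta>' y0 (\<lambda>t i. \<Sum>l<n. P i l * w t l) (\<lambda>t i. \<Sum>l<n. P i l * v t l) T"
proof -
  define w0 where "w0 l = (\<Sum>j<n. Q l j * y0 j)" for l
  have "T \<ge> 0" and w_0: "\<forall>l<n. w 0 l = w0 l"
    and w_int: "\<forall>l<n. \<forall>t\<ge>0. ((\<lambda>s. (\<Sum>j<n. R l j * w s j) + v s l) has_integral (w t l - w0 l)) {0..t}"
    and v_small: "\<forall>s. \<forall>l<n. cmod (v s l) \<le> \<delta>" and w_end: "\<forall>t\<ge>T. \<forall>l<n. w t l = 0"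
    using steer unfolding null_steering_def w0_def by auto
  have P_w0: "(\<Sum>l<n. P i l * w0 l) = y0 i" if "i < n" for i
  proof -
    have "(\<Sum>l<n. P i l * w0 l) = (\<Sum>j<n. (\<Sum>l<n. P i l * Q l j) * y0 j)"
      unfolding w0_def by (rule sum_mult_sum_swap)
    also have "\<dots> = y0 i"
      using PQ that by (simp add: if_distrib[of "\<lambda>x. x * _"] cong: if_cong)
    finally show ?thesis .
  qed
  have "((\<lambda>s. (\<Sum>j<n. Mc i j * (\<Sum>l<n. P j l * w s l)) + (\<Sum>l<n. P i l * v s l)) has_integral
          ((\<Sum>l<n. P i l * w t l) - y0 i)) {0..t}" if "i < n" "t \<ge> 0" for i t
  proof -
    have "((\<lambda>s. \<Sum>m<n. P i m * ((\<Sum>l<n. R m l * w s l) + v s m)) has_integral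
        (\<Sum>m<n. P i m * (w t m - w0 m))) {0..t}"
      using w_int that(2) by (intro has_integral_sum has_integral_mult_right) auto
    moreover have "(\<Sum>m<n. P i m * (w t m - w0 m)) = (\<Sum>l<n. P i l * w t l) - y0 i"
      using P_w0[OF that(1)] by (simp add: right_diff_distrib sum_subtractf)
    ultimately show ?thesis
      by (simp add: similarity_transform_row[OF MP that(1)])
  qed
  moreover have "cmod (\<Sum>l<n. P i l * v s l) \<le> \<delta>'" if "i < n" for i s
  proof -
    have "cmod (\<Sum>l<n. P i l * v s l) \<le> (\<Sum>i<n. \<Sum>l<n. cmod (P i l)) * \<delta>"
      using v_small by (intro norm_matrix_row_mult_le[OF that]) auto
    with small show ?thesis
      by linarith
  qed
  ultimately show ?thesis
    using \<open>T \<ge> 0\<close> w_0 w_end P_w0 by (auto simp: null_steering_def)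
qed

lemma complex_null_steering:
  fixes Mc :: "nat \<Rightarrow> nat \<Rightarrow> complex"
  assumes eig: "\<And>e u. \<exists>j<n. u j \<noteq> 0 \<Longrightarrow> \<forall>i<n. (\<Sum>j<n. Mc i j * u j) = e * u i \<Longrightarrow> Re e \<le> 0"
    and "\<delta> > 0"
  obtains y v T where "null_steering Mc {..<n} \<delta> y0 y v T"
proof -
  obtain P Q R where PQ: "\<forall>i<n. \<forall>j<n. (\<Sum>l<n. P i l * Q l j) = (if i = j then 1 else 0)"
    and MP: "\<forall>i<n. \<forall>j<n. (\<Sum>l<n. Mc i l * P l j) = (\<Sum>l<n. P i l * R l j)"
    and upper: "\<forall>i j. j < i \<longrightarrow> R i j = 0"
    and diag: "\<forall>i<n. poly (char_poly (Matrix.mat n n (\<lambda>(i, j). Mc i j))) (R i i) = 0"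
    by (rule schur_triangularization_nat)
  have re: "Re (R i i) \<le> 0" if i: "i < n" for i
  proof -
    obtain u where "\<exists>j<n. u j \<noteq> 0" "\<forall>i'<n. (\<Sum>j<n. Mc i' j * u j) = R i i * u i'"
      by (rule char_poly_root_eigenvector_nat[OF diag[rule_format, OF i]])
    then show ?thesis
      by (rule eig)
  qed
  define K where "K = (\<Sum>i<n. \<Sum>l<n. cmod (P i l)) + 1"
  have "K > 0"
    unfolding K_def by (simp add: add_nonneg_pos sum_nonneg)
  have "\<exists>w v T. null_steering R {0..<n} (\<delta> / K) (\<lambda>l. \<Sum>j<n. Q l j * y0 j) w v T"
    using upper re \<open>\<delta> > 0\<close> \<open>K > 0\<close> by (intro triangular_null_steering) auto
  then obtain w v T where steer: "null_steering R {..<n} (\<delta> / K) (\<lambda>l. \<Sum>j<n. Q l j * y0 j) w v T"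
    by (auto simp: atLeast0LessThan)
  have "(\<Sum>i<n. \<Sum>l<n. cmod (P i l)) * (\<delta> / K) \<le> \<delta>"
    using \<open>\<delta> > 0\<close> \<open>K > 0\<close> by (simp add: K_def field_simps)
  from null_steering_change_of_basis[OF PQ MP steer this]
  show thesis
    by (rule that)
qed

lemma has_integral_cart_componentwise:
  fixes f :: "real \<Rightarrow> real^'n"
  assumes "\<And>a. ((\<lambda>s. f s $ a) has_integral I $ a) S"
  shows "(f has_integral I) S"
  unfolding has_integral_componentwise_iff[of f I S]
  using assms by (auto simp: Basis_vec_def inner_axis)

lemma norm_le_card_mult_cart:
  fixes x :: "real^'n" and \<delta> :: real
  assumes "\<And>a. \<bar>x $ a\<bar> \<le> \<delta>"
  shows "norm x \<le> CARD('n) * \<delta>"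
proof -
  have "norm x \<le> (\<Sum>a\<in>UNIV. \<bar>x $ a\<bar>)"
    by (rule norm_le_l1_cart)
  also have "\<dots> \<le> (\<Sum>a\<in>(UNIV :: 'n set). \<delta>)"
    by (rule sum_mono) (rule assms)
  finally show ?thesis
    by simp
qed

lemma cmat_mult_enumerated:
  fixes M :: "real^'n::finite^'n"
  assumes "bij_betw \<iota> {..<CARD('n)} UNIV"
  shows "(cmat M *v u) $ a = (\<Sum>j<CARD('n). complex_of_real (M $ a $ \<iota> j) * u $ \<iota> j)"
  using sum.reindex_bij_betw[OF assms, of "\<lambda>b. complex_of_real (M $ a $ b) * u $ b"]
  by (simp add: matrix_vector_mult_def cmat_def)

lemma enumerated_eigenvalue_re_nonpos:
  fixes M :: "real^'n::finite^'n"
  assumes noeig: "\<not> has_pos_re_eigenvalue M" and \<iota>: "bij_betw \<iota> {..<CARD('n)} UNIV"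
    and u: "\<exists>j<CARD('n). u j \<noteq> 0"
      "\<forall>i<CARD('n). (\<Sum>j<CARD('n). complex_of_real (M $ \<iota> i $ \<iota> j) * u j) = e * u i"
  shows "Re e \<le> 0"
proof (rule ccontr)
  assume "\<not> Re e \<le> 0"
  define idx where "idx = inv_into {..<CARD('n)} \<iota>"
  have \<iota>_idx: "\<iota> (idx a) = a" and idx_less: "idx a < CARD('n)" for a
    using bij_betw_inv_into_right[OF \<iota>] inv_into_into[of a \<iota> "{..<CARD('n)}"] \<iota>
    by (auto simp: idx_def bij_betw_def)
  define v :: "complex^'n" where "v = (\<chi> a. u (idx a))"
  obtain j where "j < CARD('n)" "u j \<noteq> 0"
    using u(1) by blast
  then have "v $ \<iota> j \<noteq> 0"
    using \<iota> by (simp add: v_def idx_def bij_betw_inv_into_left)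
  then have "v \<noteq> 0"
    by auto
  moreover have "cmat M *v v = e *s v"
  proof -
    have "(\<Sum>j<CARD('n). complex_of_real (M $ a $ \<iota> j) * u (idx (\<iota> j)))
        = (\<Sum>j<CARD('n). complex_of_real (M $ \<iota> (idx a) $ \<iota> j) * u j)" for a
      using \<iota> by (intro sum.cong) (simp_all add: idx_def bij_betw_inv_into_left \<iota>_idx[unfolded idx_def])
    then show ?thesis
      using u(2) idx_less
      by (simp add: Finite_Cartesian_Product.vec_eq_iff cmat_mult_enumerated[OF \<iota>] v_def)
  qed
  ultimately have "has_pos_re_eigenvalue M"
    using \<open>\<not> Re e \<le> 0\<close> unfolding has_pos_re_eigenvalue_def by force
  with noeig show False
    by simp
qed

text \<open>As \<open>M\<close> is real, the real part of a solution of the complexified system solves the real one.\<close>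

lemma real_part_of_enumerated_steering:
  fixes M :: "real^'n::finite^'n" and x0 :: "real^'n" and \<delta> :: real
  assumes \<iota>: "bij_betw \<iota> {..<CARD('n)} UNIV"
    and steer: "null_steering (\<lambda>i j. complex_of_real (M $ \<iota> i $ \<iota> j)) {..<CARD('n)} \<delta>
      (\<lambda>j. complex_of_real (x0 $ \<iota> j)) y v T"
  defines "x \<equiv> \<lambda>t. \<chi> a. Re (y t (inv_into {..<CARD('n)} \<iota> a))"
    and "z \<equiv> \<lambda>t. \<chi> a. Re (v t (inv_into {..<CARD('n)} \<iota> a))"
  shows "T \<ge> 0" "x 0 = x0" "\<forall>t\<ge>0. ((\<lambda>s. M *v x s + z s) has_integral (x t - x0)) {0..t}"
    "\<forall>s. norm (z s) \<le> CARD('n) * \<delta>" "x T = 0"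
proof -
  define idx where "idx = inv_into {..<CARD('n)} \<iota>"
  have \<iota>_idx: "\<iota> (idx a) = a" and idx_less: "idx a \<in> {..<CARD('n)}" for a
    using bij_betw_inv_into_right[OF \<iota>] inv_into_into[of a \<iota> "{..<CARD('n)}"] \<iota>
    by (auto simp: idx_def bij_betw_def)
  have idx_\<iota>: "idx (\<iota> i) = i" if "i < CARD('n)" for i
    using \<iota> that by (simp add: idx_def bij_betw_inv_into_left)
  have x_idx: "x t $ a = Re (y t (idx a))" and z_idx: "z t $ a = Re (v t (idx a))" for t a
    by (simp_all add: x_def z_def idx_def)
  show "T \<ge> 0"
    using steer by (simp add: null_steering_def)
  have y_0: "\<forall>i\<in>{..<CARD('n)}. y 0 i = complex_of_real (x0 $ \<iota> i)"
    and y_int: "\<forall>i\<in>{..<CARD('n)}. \<forall>t\<ge>0. ((\<lambda>s. (\<Sum>j<CARD('n). complex_of_real (M $ \<iota> i $ \<iota> j) * y s j)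
        + v s i) has_integral (y t i - complex_of_real (x0 $ \<iota> i))) {0..t}"
    and v_small: "\<forall>s. \<forall>i\<in>{..<CARD('n)}. cmod (v s i) \<le> \<delta>"
    and y_end: "\<forall>t\<ge>T. \<forall>i\<in>{..<CARD('n)}. y t i = 0"
    using steer unfolding null_steering_def by blast+
  show "x 0 = x0"
    using y_0 idx_less by (simp add: x_idx \<iota>_idx Finite_Cartesian_Product.vec_eq_iff)
  show "x T = 0"
    using y_end idx_less by (simp add: x_idx Finite_Cartesian_Product.vec_eq_iff)
  show "\<forall>s. norm (z s) \<le> CARD('n) * \<delta>"
  proof
    fix s
    have "\<bar>z s $ a\<bar> \<le> \<delta>" for a
    proof -
      have "\<bar>z s $ a\<bar> \<le> cmod (v s (idx a))"
        by (simp add: z_idx abs_Re_le_cmod)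
      also have "\<dots> \<le> \<delta>"
        using v_small idx_less by blast
      finally show ?thesis .
    qed
    then show "norm (z s) \<le> CARD('n) * \<delta>"
      by (rule norm_le_card_mult_cart)
  qed
  show "\<forall>t\<ge>0. ((\<lambda>s. M *v x s + z s) has_integral (x t - x0)) {0..t}"
  proof (intro allI impI has_integral_cart_componentwise)
    fix t :: real and a :: 'n
    assume "t \<ge> 0"
    have "(M *v x s + z s) $ a
        = Re ((\<Sum>j<CARD('n). complex_of_real (M $ \<iota> (idx a) $ \<iota> j) * y s j) + v s (idx a))" for s
    proof -
      have "(\<Sum>j<CARD('n). complex_of_real (M $ a $ \<iota> j) * y s (idx (\<iota> j)))
          = (\<Sum>j<CARD('n). complex_of_real (M $ \<iota> (idx a) $ \<iota> j) * y s j)"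
        by (rule sum.cong) (simp_all add: idx_\<iota> \<iota>_idx)
      moreover have "(M *v x s) $ a = Re ((cmat M *v (\<chi> b. y s (idx b))) $ a)"
        by (simp add: matrix_vector_mult_def cmat_def x_idx Re_sum)
      ultimately show ?thesis
        by (simp add: cmat_mult_enumerated[OF \<iota>] z_idx)
    qed
    with has_integral_linear[OF y_int[rule_format, OF idx_less[of a] \<open>t \<ge> 0\<close>] bounded_linear_Re]
    have "((\<lambda>s. (M *v x s + z s) $ a) has_integral
        Re (y t (idx a) - complex_of_real (x0 $ \<iota> (idx a)))) {0..t}"
      by (simp add: o_def)
    then show "((\<lambda>s. (M *v x s + z s) $ a) has_integral (x t - x0) $ a) {0..t}"
      by (simp add: x_idx \<iota>_idx)
  qed
qed

lemma real_null_steering: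
  fixes M :: "real^'n::finite^'n" and x0 :: "real^'n"
  assumes noeig: "\<not> has_pos_re_eigenvalue M" and "\<epsilon> > 0"
  obtains x z :: "real \<Rightarrow> real^'n" and T :: real where "T \<ge> 0" "x 0 = x0"
    "\<forall>t\<ge>0. ((\<lambda>s. M *v x s + z s) has_integral (x t - x0)) {0..t}"
    "\<forall>s. norm (z s) \<le> \<epsilon>" "x T = 0"
proof -
  obtain \<iota> :: "nat \<Rightarrow> 'n" where \<iota>: "bij_betw \<iota> {..<CARD('n)} UNIV"
    using ex_bij_betw_nat_finite[of "UNIV :: 'n set"] by (auto simp: lessThan_atLeast0)
  have "\<epsilon> / CARD('n) > 0"
    using \<open>\<epsilon> > 0\<close> by simp
  obtain y v T where "null_steering (\<lambda>i j. complex_of_real (M $ \<iota> i $ \<iota> j)) {..<CARD('n)} (\<epsilon> / CARD('n))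
      (\<lambda>j. complex_of_real (x0 $ \<iota> j)) y v T"
    by (rule complex_null_steering[OF enumerated_eigenvalue_re_nonpos[OF noeig \<iota>] \<open>\<epsilon> / CARD('n) > 0\<close>])
  from real_part_of_enumerated_steering[OF \<iota> this] show thesis
    using that by simp
qed

section \<open>Uniqueness of solutions\<close>

lemma power_has_integral_0:
  fixes s :: real
  assumes "s \<ge> 0"
  shows "((\<lambda>r. r ^ k) has_integral (s ^ Suc k / Suc k)) {0..s}"
proof -
  have "((\<lambda>r. r ^ Suc k / Suc k) has_real_derivative x ^ k) (at x)" for x
    using DERIV_cdivide[OF DERIV_pow[of "Suc k" x], of "Suc k"] by (simp del: of_nat_Suc)
  then have "((\<lambda>r. r ^ Suc k / Suc k) has_vector_derivative x ^ k) (at x within {0..s})" for x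
    by (simp add: has_real_derivative_iff_has_vector_derivative has_vector_derivative_at_within)
  from fundamental_theorem_of_calculus[OF assms this]
  show ?thesis
    by simp
qed

lemma homogeneous_integral_equation_picard_bound:
  fixes M :: "real^'n::finite^'n" and d :: "real \<Rightarrow> real^'n"
  assumes int: "\<forall>t\<ge>0. ((\<lambda>s. M *v d s) has_integral d t) {0..t}"
    and K: "\<forall>s\<in>{0..t0}. norm (d s) \<le> K"
    and L: "L \<ge> 0" "\<And>x. norm (M *v x) \<le> L * norm x"
  shows "\<forall>s\<in>{0..t0}. norm (d s) \<le> K * (inverse (fact k) * (L * s) ^ k)"
proof (induction k)
  case 0
  then show ?case
    using K by simp
next
  case (Suc k)
  show ?case
  proof
    fix s
    assume s: "s \<in> {0..t0}"
    define c where "c = L * K * inverse (fact k) * L ^ k"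
    have "(\<lambda>r. M *v d r) integrable_on {0..s}" and d_s: "d s = integral {0..s} (\<lambda>r. M *v d r)"
      using int s by (auto intro: integral_unique[symmetric])
    have c_int: "((\<lambda>r. c * r ^ k) has_integral (c * (s ^ Suc k / Suc k))) {0..s}"
      using s by (intro has_integral_mult_right power_has_integral_0) simp
    have "norm (M *v d r) \<le> c * r ^ k" if "r \<in> {0..s}" for r
    proof -
      have "norm (d r) \<le> K * (inverse (fact k) * (L * r) ^ k)"
        using Suc.IH that s by auto
      then have "L * norm (d r) \<le> L * (K * (inverse (fact k) * (L * r) ^ k))"
        using L(1) by (rule mult_left_mono)
      also have "\<dots> = c * r ^ k"
        by (simp add: c_def power_mult_distrib algebra_simps)
      finally show ?thesis
        using L(2)[of "d r"] by linarith
    qed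
    then have "norm (d s) \<le> integral {0..s} (\<lambda>r. c * r ^ k)"
      unfolding d_s using \<open>(\<lambda>r. M *v d r) integrable_on {0..s}\<close> c_int
      by (intro integral_norm_bound_integral) auto
    also have "\<dots> = c * (s ^ Suc k / Suc k)"
      using c_int by (rule integral_unique)
    also have "\<dots> = K * (inverse (fact (Suc k)) * (L * s) ^ Suc k)"
      by (simp add: c_def power_mult_distrib field_simps)
    finally show "norm (d s) \<le> K * (inverse (fact (Suc k)) * (L * s) ^ Suc k)" .
  qed
qed

lemma homogeneous_integral_equation_zero:
  fixes M :: "real^'n::finite^'n" and d :: "real \<Rightarrow> real^'n"
  assumes int: "\<forall>t\<ge>0. ((\<lambda>s. M *v d s) has_integral d t) {0..t}" and "t0 \<ge> 0"
  shows "d t0 = 0"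
proof -
  have "continuous_on {0..t0} d"
    using int by (intro continuous_on_primitive[where c = 0 and f = "\<lambda>s. M *v d s"]) auto
  then have "bounded (d ` {0..t0})"
    by (intro compact_imp_bounded compact_continuous_image) auto
  then obtain K where K: "\<forall>s\<in>{0..t0}. norm (d s) \<le> K"
    unfolding bounded_iff by blast
  obtain L where L: "L \<ge> 0" "\<And>x. norm (M *v x) \<le> L * norm x"
    using bounded_linear.nonneg_bounded[OF matrix_vector_mul_bounded_linear[of M]]
    by (auto simp: mult.commute)
  have "(\<lambda>k. K * (inverse (fact k) * (L * t0) ^ k)) \<longlonglongrightarrow> K * 0"
    by (intro tendsto_mult_left summable_LIMSEQ_zero summable_exp)
  moreover have "norm (d t0) \<le> K * (inverse (fact k) * (L * t0) ^ k)" for k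
    using homogeneous_integral_equation_picard_bound[OF int K L, of k] \<open>t0 \<ge> 0\<close> by simp
  ultimately have "norm (d t0) \<le> K * 0"
    by (intro LIMSEQ_le_const) auto
  then show ?thesis
    by simp
qed

lemma integral_equation_unique:
  fixes M :: "real^'n::finite^'n" and x y z :: "real \<Rightarrow> real^'n"
  assumes x: "\<forall>t\<ge>0. ((\<lambda>s. M *v x s + z s) has_integral (x t - x0)) {0..t}"
    and y: "\<forall>t\<ge>0. ((\<lambda>s. M *v y s + z s) has_integral (y t - x0)) {0..t}" and "t0 \<ge> 0"
  shows "y t0 = x t0"
proof -
  have "\<forall>t\<ge>0. ((\<lambda>s. M *v (y s - x s)) has_integral (y t - x t)) {0..t}"
  proof (intro allI impI)
    fix t :: real
    assume "t \<ge> 0"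
    from has_integral_diff[OF y[rule_format, OF this] x[rule_format, OF this]]
    show "((\<lambda>s. M *v (y s - x s)) has_integral (y t - x t)) {0..t}"
      by (simp add: matrix_vector_mult_diff_distrib)
  qed
  from homogeneous_integral_equation_zero[OF this \<open>t0 \<ge> 0\<close>] show ?thesis
    by simp
qed

section \<open>Resilient stabilizability\<close>

lemma no_pos_re_eigenvalue_within_stab_radius:
  assumes "mnorm D < real_stab_radius A"
  shows "\<not> has_pos_re_eigenvalue (A + D)"
proof
  assume "has_pos_re_eigenvalue (A + D)"
  then have "mnorm D \<in> {mnorm D' | D'. has_pos_re_eigenvalue (A + D')}"
    by blast
  moreover have "bdd_below {mnorm D' | D'. has_pos_re_eigenvalue (A + D')}"
    by (rule bdd_belowI[of _ 0]) (auto simp: mnorm_def intro: onorm_pos_le)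
  ultimately have "real_stab_radius A \<le> mnorm D"
    unfolding real_stab_radius_def by (rule cInf_lower)
  with assms show False
    by simp
qed

lemma resiliently_stabilizable_if_null_steerable:
  fixes M :: "real^'n::finite^'n" and G :: "real^'m::finite^'n" and H :: "real^'p::finite^'n"
  assumes steer: "\<And>x0. \<exists>(x :: real \<Rightarrow> real^'n) z T. T \<ge> 0 \<and> x 0 = x0 \<and>
      (\<forall>t\<ge>0. ((\<lambda>s. M *v x s + z s) has_integral (x t - x0)) {0..t}) \<and>
      (\<forall>t. \<forall>w\<in>W. \<exists>u\<in>U. G *v u + H *v w = z t) \<and> x T = 0"
  shows "resiliently_stabilizable M G H U W"
  unfolding resiliently_stabilizable_def
proof
  fix x0 :: "real^'n"
  obtain x z :: "real \<Rightarrow> real^'n" and T :: real where "T \<ge> 0" "x 0 = x0"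
    and x_int: "\<forall>t\<ge>0. ((\<lambda>s. M *v x s + z s) has_integral (x t - x0)) {0..t}"
    and compensable: "\<forall>t. \<forall>w\<in>W. \<exists>u\<in>U. G *v u + H *v w = z t" and "x T = 0"
    using steer[of x0] by blast
  \<comment> \<open>compensates the disturbance, so that the closed loop receives exactly \<open>z\<close>\<close>
  define kappa where "kappa t w = (SOME u. u \<in> U \<and> G *v u + H *v w = z t)" for t w
  have kappa: "kappa t w \<in> U \<and> G *v kappa t w + H *v w = z t" if "w \<in> W" for t w
  proof -
    have "\<exists>u. u \<in> U \<and> G *v u + H *v w = z t"
      using compensable that by blast
    then show ?thesis
      unfolding kappa_def by (rule someI_ex)
  qed
  show "\<exists>kappa. (\<forall>t\<ge>0. \<forall>v\<in>W. kappa t v \<in> U) \<and>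
      (\<forall>w. (\<forall>t\<ge>0. w t \<in> W) \<longrightarrow> (\<exists>T\<ge>0. \<exists>x. ode_solution M G H (\<lambda>t. kappa t (w t)) w x0 x \<and>
        (\<forall>y. ode_solution M G H (\<lambda>t. kappa t (w t)) w x0 y \<longrightarrow> (\<forall>t\<ge>0. y t = x t)) \<and> x T = 0))"
  proof (intro exI[of _ kappa] conjI allI impI ballI)
    show "kappa t v \<in> U" if "v \<in> W" for t v
      using kappa[OF that] by blast
  next
    fix w :: "real \<Rightarrow> real^'p"
    assume w: "\<forall>t\<ge>0. w t \<in> W"
    have solution_iff: "ode_solution M G H (\<lambda>t. kappa t (w t)) w x0 y \<longleftrightarrow>
        y 0 = x0 \<and> (\<forall>t\<ge>0. ((\<lambda>s. M *v y s + z s) has_integral (y t - x0)) {0..t})" for y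
    proof -
      have "((\<lambda>s. M *v y s + G *v kappa s (w s) + H *v w s) has_integral (y t - x0)) {0..t} \<longleftrightarrow>
          ((\<lambda>s. M *v y s + z s) has_integral (y t - x0)) {0..t}" for t
        by (rule has_integral_cong) (use w kappa in \<open>auto simp: add.assoc\<close>)
      then show ?thesis
        unfolding ode_solution_def by simp
    qed
    have "y t = x t" if "ode_solution M G H (\<lambda>t. kappa t (w t)) w x0 y" and "t \<ge> 0" for y t
      using that solution_iff integral_equation_unique[OF x_int] by blast
    then show "\<exists>T\<ge>0. \<exists>x. ode_solution M G H (\<lambda>t. kappa t (w t)) w x0 x \<and>
        (\<forall>y. ode_solution M G H (\<lambda>t. kappa t (w t)) w x0 y \<longrightarrow> (\<forall>t\<ge>0. y t = x t)) \<and> x T = 0"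
      using solution_iff[of x] \<open>T \<ge> 0\<close> \<open>x 0 = x0\<close> x_int \<open>x T = 0\<close> by blast
  qed
qed

theorem proposition5:
  fixes N :: nat
    and blk :: "'n::finite \<Rightarrow> nat"
    and blkm :: "'m::finite \<Rightarrow> nat"
    and A D :: "real^'n^'n"
    and B :: "real^'m^'n"
    and C :: "real^'p::finite^'n"
  assumes blocks: "range blk = {1..N}"
    and inputs: "\<forall>j. blkm j \<in> {1..N}"
    and A_diag: "\<forall>i k. blk i \<noteq> blk k \<longrightarrow> A $ i $ k = 0"
    and D_offdiag: "\<forall>i k. blk i = blk k \<longrightarrow> D $ i $ k = 0"
    and D_nz: "D \<noteq> 0"
    and B_diag: "\<forall>i j. blk i \<noteq> blkm j \<longrightarrow> B $ i $ j = 0"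
    and C_N: "\<forall>i j. blk i \<noteq> N \<longrightarrow> C $ i $ j = 0"
    and rank: "\<forall>i\<in>{1..<N}. dim {column j B | j. blkm j = i} = card {k. blk k = i}"
    and Z_int: "(top_of_set (block_subspace blk N)) interior_of (Z_set B C blkm N) \<noteq> {}"
    and small: "mnorm D < real_stab_radius A"
  shows "resiliently_stabilizable (A + D) B C cube cube"
proof -
  obtain \<epsilon> where "\<epsilon> > 0"
    and compensable: "\<forall>z w. norm z \<le> \<epsilon> \<longrightarrow> w \<in> cube \<longrightarrow> (\<exists>u\<in>cube. B *v u + C *v w = z)"
    using compensable_near_zero[OF blocks inputs B_diag C_N rank Z_int] by blast
  have "\<exists>(x :: real \<Rightarrow> real^'n) z T. T \<ge> 0 \<and> x 0 = x0 \<and>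
      (\<forall>t\<ge>0. ((\<lambda>s. (A + D) *v x s + z s) has_integral (x t - x0)) {0..t}) \<and>
      (\<forall>t. \<forall>w\<in>cube. \<exists>u\<in>cube. B *v u + C *v w = z t) \<and> x T = 0" for x0
  proof -
    obtain x z :: "real \<Rightarrow> real^'n" and T :: real where "T \<ge> 0" "x 0 = x0"
      "\<forall>t\<ge>0. ((\<lambda>s. (A + D) *v x s + z s) has_integral (x t - x0)) {0..t}"
      and z_small: "\<forall>s. norm (z s) \<le> \<epsilon>" and "x T = 0"
      by (rule real_null_steering[OF no_pos_re_eigenvalue_within_stab_radius[OF small] \<open>\<epsilon> > 0\<close>])
    moreover have "\<forall>t. \<forall>w\<in>cube. \<exists>u\<in>cube. B *v u + C *v w = z t"
      using compensable z_small by blast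
    ultimately show ?thesis
      by blast
  qed
  then show ?thesis
    by (rule resiliently_stabilizable_if_null_steerable)
qed

end
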